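(* Fix one of the three notions of free operations (detection-incoherent, creation-incoherent, detection-creation-incoherent). A functional $M$ from quantum operations to $[0,\infty)$ is a measure if and only if all of the following hold: $M(\Theta)=0\Leftrightarrow\Theta$ is free; $M(\Theta)\ge M(\Phi\circ\Theta)$ for all $\Theta$ and all free $\Phi$; $M(\Theta)\ge M(\Theta\circ\Phi)$ for all $\Theta$ and all free $\Phi$; $M(\Theta)\ge M(\Theta\otimes\mathbb{1})$ for all $\Theta$, where $\mathbb{1}$ is the identity channel on an ancillary system; and $M$ is convex.
   Context: Every finite-dimensional system carries a fixed orthonormal incoherent basis $\{|i\rangle\}$; composite systems use the product basis. The total dephasing map is $\Delta(\rho)=\sum_i|i\rangle\langle i|\rho|i\rangle\langle i|$ (tensor product on composite systems). A quantum operation is a completely positive trace-preserving linear map. $\Phi$ is detection-incoherent iff $\Delta\Phi=\Delta\Phi\Delta$, creation-incoherent iff $\Phi\Delta=\Delta\Phi\Delta$, detection-creation-incoherent iff $\Delta\Phi=\Phi\Delta$. A super-operation is free iff it is a finite composition of elemental super-operations $\Theta\mapsto\Phi\circ\Theta$, $\Theta\mapsto\Theta\circ\Phi$, $\Theta\mapsto\Theta\otimes\Phi$, $\Theta\mapsto\Phi\otimes\Theta$ with $\Phi$ free. A measure is a functional $M$ from quantum operations to $[0,\infty)$ such that (i) $M(\Theta)=0$ iff $\Theta$ is free; (ii) $M(\mathcal{F}[\Theta])\le M(\Theta)$ for all $\Theta$ and all free super-operations $\mathcal{F}$; (iii) $M$ is convex: $M(t\Theta+(1-t)\Psi)\le tM(\Theta)+(1-t)M(\Psi)$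 for $t\in[0,1]$ and $\Theta,\Psi$ with the same input and output systems. *)

theory Defs
  imports Complex_Main "Jordan_Normal_Form.Matrix"
begin

text \<open>A system is identified by its dimension d (at least 1); its incoherent basis is the
standard basis. A composite system of dimensions d1 and d2 is the system of dimension d1*d2
whose standard basis is the product basis, the pair (i,k) being indexed by i*d2+k
(Kronecker ordering). A (candidate) operation is a record holding its input dimension,
its output dimension and the map on matrices; the map is normalised to the zero matrix
outside the input carrier, so that records coincide iff the operations coincide.\<close>

record qop =
  qin :: nat
  qout :: nat
  qmap :: "complex mat \<Rightarrow> complex mat"

definition mat_unit :: "nat \<Rightarrow> nat \<Rightarrow> nat \<Rightarrow> complex mat" where
  "mat_unit n i j = mat n n (\<lambda>(a,b). if a = i \<and> b = j then 1 else 0)"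

definition mtrace :: "nat \<Rightarrow> complex mat \<Rightarrow> complex" where
  "mtrace n A = (\<Sum>i<n. A $$ (i,i))"

definition psd :: "nat \<Rightarrow> complex mat \<Rightarrow> bool" where
  "psd n A \<longleftrightarrow> A \<in> carrier_mat n n \<and>
     (\<forall>v :: nat \<Rightarrow> complex. let z = (\<Sum>i<n. \<Sum>j<n. cnj (v i) * A $$ (i,j) * v j)
                               in Im z = 0 \<and> Re z \<ge> 0)"

definition tens_map :: "nat \<Rightarrow> nat \<Rightarrow> (complex mat \<Rightarrow> complex mat) \<Rightarrow>
                        nat \<Rightarrow> nat \<Rightarrow> (complex mat \<Rightarrow> complex mat) \<Rightarrow> complex mat \<Rightarrow> complex mat" where
  "tens_map n1 m1 f n2 m2 g A =
     (if A \<in> carrier_mat (n1*n2) (n1*n2) then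
        mat (m1*m2) (m1*m2) (\<lambda>(p,q).
          \<Sum>i<n1. \<Sum>j<n1. \<Sum>k<n2. \<Sum>l<n2.
             A $$ (i*n2+k, j*n2+l) * f (mat_unit n1 i j) $$ (p div m2, q div m2)
                                  * g (mat_unit n2 k l) $$ (p mod m2, q mod m2))
      else 0\<^sub>m (m1*m2) (m1*m2))"

definition id_map :: "nat \<Rightarrow> complex mat \<Rightarrow> complex mat" where
  "id_map k A = (if A \<in> carrier_mat k k then A else 0\<^sub>m k k)"

definition is_qop :: "qop \<Rightarrow> bool" where
  "is_qop \<Theta> \<longleftrightarrow> (let n = qin \<Theta>; m = qout \<Theta>; f = qmap \<Theta> in
     0 < n \<and> 0 < m \<and>
     (\<forall>A. A \<notin> carrier_mat n n \<longrightarrow> f A = 0\<^sub>m m m) \<and>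
     (\<forall>A \<in> carrier_mat n n. f A \<in> carrier_mat m m) \<and>
     (\<forall>A \<in> carrier_mat n n. \<forall>B \<in> carrier_mat n n. \<forall>c::complex.
         f (c \<cdot>\<^sub>m A + B) = c \<cdot>\<^sub>m f A + f B) \<and>
     (\<forall>A \<in> carrier_mat n n. mtrace m (f A) = mtrace n A) \<and>
     (\<forall>k>0. \<forall>A. psd (n*k) A \<longrightarrow> psd (m*k) (tens_map n m f k k (id_map k) A)))"

definition qcomp :: "qop \<Rightarrow> qop \<Rightarrow> qop" where
  "qcomp \<Phi> \<Theta> = \<lparr> qin = qin \<Theta>, qout = qout \<Phi>,
     qmap = (\<lambda>A. if A \<in> carrier_mat (qin \<Theta>) (qin \<Theta>) then qmap \<Phi> (qmap \<Theta> A)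
                 else 0\<^sub>m (qout \<Phi>) (qout \<Phi>)) \<rparr>"

definition qtens :: "qop \<Rightarrow> qop \<Rightarrow> qop" where
  "qtens \<Theta> \<Phi> = \<lparr> qin = qin \<Theta> * qin \<Phi>, qout = qout \<Theta> * qout \<Phi>,
     qmap = tens_map (qin \<Theta>) (qout \<Theta>) (qmap \<Theta>) (qin \<Phi>) (qout \<Phi>) (qmap \<Phi>) \<rparr>"

definition qid :: "nat \<Rightarrow> qop" where
  "qid k = \<lparr> qin = k, qout = k, qmap = id_map k \<rparr>"

definition qmix :: "real \<Rightarrow> qop \<Rightarrow> qop \<Rightarrow> qop" where
  "qmix t \<Theta> \<Psi> = \<lparr> qin = qin \<Theta>, qout = qout \<Theta>,
     qmap = (\<lambda>A. if A \<in> carrier_mat (qin \<Theta>) (qin \<Theta>)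
                 then complex_of_real t \<cdot>\<^sub>m qmap \<Theta> A + complex_of_real (1 - t) \<cdot>\<^sub>m qmap \<Psi> A
                 else 0\<^sub>m (qout \<Theta>) (qout \<Theta>)) \<rparr>"

definition deph :: "nat \<Rightarrow> complex mat \<Rightarrow> complex mat" where
  "deph n A = mat n n (\<lambda>(i,j). if i = j then A $$ (i,j) else 0)"

datatype notion = DI | CI | DCI

definition free :: "notion \<Rightarrow> qop \<Rightarrow> bool" where
  "free X \<Phi> \<longleftrightarrow> is_qop \<Phi> \<and> (let n = qin \<Phi>; m = qout \<Phi>; f = qmap \<Phi> in
     (case X of
        DI \<Rightarrow> (\<forall>A \<in> carrier_mat n n. deph m (f A) = deph m (f (deph n A)))
      | CI \<Rightarrow> (\<forall>A \<in> carrier_mat n n. f (deph n A) = deph m (f (deph n A)))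
      | DCI \<Rightarrow> (\<forall>A \<in> carrier_mat n n. deph m (f A) = f (deph n A))))"

datatype elem = Post qop | Pre qop | TensR qop | TensL qop

fun elem_op :: "elem \<Rightarrow> qop" where
  "elem_op (Post \<Phi>) = \<Phi>" | "elem_op (Pre \<Phi>) = \<Phi>"
| "elem_op (TensR \<Phi>) = \<Phi>" | "elem_op (TensL \<Phi>) = \<Phi>"

fun elem_apply :: "elem \<Rightarrow> qop \<Rightarrow> qop option" where
  "elem_apply (Post \<Phi>) \<Theta> = (if qin \<Phi> = qout \<Theta> then Some (qcomp \<Phi> \<Theta>) else None)"
| "elem_apply (Pre \<Phi>) \<Theta> = (if qout \<Phi> = qin \<Theta> then Some (qcomp \<Theta> \<Phi>) else None)"
| "elem_apply (TensR \<Phi>) \<Theta> = Some (qtens \<Theta> \<Phi>)"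
| "elem_apply (TensL \<Phi>) \<Theta> = Some (qtens \<Phi> \<Theta>)"

text \<open>A super-operation given as a finite list of elemental ones, applied first to last.\<close>
fun sop_apply :: "elem list \<Rightarrow> qop \<Rightarrow> qop option" where
  "sop_apply [] \<Theta> = Some \<Theta>"
| "sop_apply (e # es) \<Theta> = (case elem_apply e \<Theta> of None \<Rightarrow> None | Some \<Theta>' \<Rightarrow> sop_apply es \<Theta>')"

definition free_sop :: "notion \<Rightarrow> elem list \<Rightarrow> bool" where
  "free_sop X F \<longleftrightarrow> (\<forall>e \<in> set F. free X (elem_op e))"

definition convex_meas :: "(qop \<Rightarrow> real) \<Rightarrow> bool" where
  "convex_meas M \<longleftrightarrow> (\<forall>\<Theta> \<Psi> t. is_qop \<Theta> \<longrightarrow> is_qop \<Psi> \<longrightarrow> qin \<Theta> = qin \<Psi> \<longrightarrow>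
      qout \<Theta> = qout \<Psi> \<longrightarrow> 0 \<le> t \<longrightarrow> t \<le> 1 \<longrightarrow>
      M (qmix t \<Theta> \<Psi>) \<le> t * M \<Theta> + (1 - t) * M \<Psi>)"

definition is_measure :: "notion \<Rightarrow> (qop \<Rightarrow> real) \<Rightarrow> bool" where
  "is_measure X M \<longleftrightarrow>
     (\<forall>\<Theta>. is_qop \<Theta> \<longrightarrow> 0 \<le> M \<Theta>) \<and>
     (\<forall>\<Theta>. is_qop \<Theta> \<longrightarrow> (M \<Theta> = 0 \<longleftrightarrow> free X \<Theta>)) \<and>
     (\<forall>F \<Theta> \<Theta>'. free_sop X F \<longrightarrow> is_qop \<Theta> \<longrightarrow> sop_apply F \<Theta> = Some \<Theta>' \<longrightarrow> M \<Theta>' \<le> M \<Theta>) \<and>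
     convex_meas M"

end

theory Submission
  imports Defs
begin

text \<open>Necessity is immediate: post- and pre-composition with a free operation and appending an
  identity channel (which is free) are elemental free super-operations. For sufficiency it is
  enough, by induction along the list of elemental super-operations, to treat a single step.
  Tensoring is reduced to the three given monotonicity properties through
  \<open>\<Theta> \<otimes> \<Phi> = (\<one> \<otimes> \<Phi>) \<circ> (\<Theta> \<otimes> \<one>)\<close> and \<open>\<one> \<otimes> \<Theta> = S \<circ> (\<Theta> \<otimes> \<one>) \<circ> S'\<close> with swap
  channels \<open>S\<close>, \<open>S'\<close>: swaps and identities commute with dephasing, hence are free for all three
  notions, and tensor products of free operations are free because dephasing factorises over the
  product basis. Quantum operations are closed under these constructions, so the induction
  proceeds.\<close>

section \<open>Sums and index arithmetic\<close>

lemma sum_sum_delta: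
  fixes h :: "nat \<Rightarrow> nat \<Rightarrow> 'a::comm_monoid_add"
  assumes "a < k" "b < l"
  shows "(\<Sum>c<k. \<Sum>d<l. if a = c \<and> b = d then h c d else 0) = h a b"
proof -
  have "(\<Sum>c<k. \<Sum>d<l. if a = c \<and> b = d then h c d else 0) =
        (\<Sum>c<k. if a = c then (\<Sum>d<l. if b = d then h c d else 0) else 0)"
    by (intro sum.cong) auto
  then show ?thesis using assms by simp
qed

lemma sum_lessThan_Times:
  "(\<Sum>i<n. \<Sum>j<n. h i j) = (\<Sum>u\<in>{..<n} \<times> {..<n}. h (fst u) (snd u))"
  by (simp add: sum.cartesian_product case_prod_beta)

lemma sum_rearrange_product:
  fixes \<alpha> :: "'s \<Rightarrow> 't \<Rightarrow> 'a::comm_semiring_1"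
  shows "(\<Sum>u\<in>U. \<Sum>v\<in>V. (\<Sum>s\<in>S. \<Sum>t\<in>T. \<alpha> s t * F s u * G t v) * X u * Y v) =
         (\<Sum>s\<in>S. \<Sum>t\<in>T. \<alpha> s t * (\<Sum>u\<in>U. F s u * X u) * (\<Sum>v\<in>V. G t v * Y v))"
proof -
  have "(\<Sum>u\<in>U. \<Sum>v\<in>V. (\<Sum>s\<in>S. \<Sum>t\<in>T. \<alpha> s t * F s u * G t v) * X u * Y v) =
        (\<Sum>u\<in>U. \<Sum>v\<in>V. \<Sum>s\<in>S. \<Sum>t\<in>T. \<alpha> s t * F s u * X u * (G t v * Y v))"
    by (simp add: sum_distrib_left sum_distrib_right mult_ac)
  also have "\<dots> = (\<Sum>s\<in>S. \<Sum>t\<in>T. \<Sum>u\<in>U. \<Sum>v\<in>V. \<alpha> s t * F s u * X u * (G t v * Y v))"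
    by (subst sum.swap, subst (2) sum.swap, subst (3) sum.swap) (rule sum.swap)
  also have "\<dots> = (\<Sum>s\<in>S. \<Sum>t\<in>T. \<alpha> s t * (\<Sum>u\<in>U. F s u * X u) * (\<Sum>v\<in>V. G t v * Y v))"
    by (simp add: sum_distrib_left sum_distrib_right mult_ac)
  finally show ?thesis .
qed

lemma mult_add_less_mult: "i < n \<Longrightarrow> k < m \<Longrightarrow> i * m + k < n * (m::nat)"
  using mult_le_mono1[of "Suc i" n m] by simp

lemma mod_less_of_less_mult: "P < n * m \<Longrightarrow> P mod m < (m::nat)"
  by (cases m) auto

lemma mult_add_div [simp]: "k < m \<Longrightarrow> (i * m + k) div m = (i::nat)"
  and mult_add_mod [simp]: "k < m \<Longrightarrow> (i * m + k) mod m = (k::nat)"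
  by auto

lemma mult_add_eq_iff: "k < m \<Longrightarrow> l < m \<Longrightarrow> i * m + k = j * m + l \<longleftrightarrow> i = j \<and> k = (l::nat)"
  by (metis mult_add_div mult_add_mod)

lemma sum_lessThan_mult: "(\<Sum>P<n*k. f P) = (\<Sum>i<n. \<Sum>c<k. f (i * k + c :: nat))"
proof -
  have "(\<Sum>P\<in>{i*k..<i*k+k}. f P) = (\<Sum>c<k. f (i*k + c))" for i
    by (rule sum.reindex_bij_witness[where j="\<lambda>P. P - i*k" and i="\<lambda>c. i*k + c"]) auto
  then show ?thesis unfolding sum.nat_group[symmetric] by simp
qed

lemma bij_betw_block_index:
  assumes "bij_betw \<rho> {..<n} {..<m}"
  shows "bij_betw (\<lambda>P. \<rho> (P div j) * j + P mod j) {..<n*j} {..<m*(j::nat)}"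
proof (cases "j = 0")
  case False
  then have j: "0 < j" by simp
  have \<rho>: "inj_on \<rho> {..<n}" "\<And>i. i < n \<Longrightarrow> \<rho> i < m"
    and \<rho>': "\<And>i. i < m \<Longrightarrow> \<rho> (inv_into {..<n} \<rho> i) = i"
    using assms by (auto simp: bij_betw_def f_inv_into_f)
  have \<rho>'_less: "\<And>i. i < m \<Longrightarrow> inv_into {..<n} \<rho> i < n"
    using assms by (metis bij_betw_def inv_into_into lessThan_iff)
  show ?thesis
    by (rule bij_betw_byWitness[where f' = "\<lambda>P. inv_into {..<n} \<rho> (P div j) * j + P mod j"])
      (use j \<rho> \<rho>' \<rho>'_less in \<open>auto simp: less_mult_imp_div_less intro!: mult_add_less_mult\<close>)
qed (simp add: bij_betw_def)

section \<open>Linear maps on matrices and their tensor products\<close>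

lemma mat_unit_carrier [simp]: "mat_unit n i j \<in> carrier_mat n n"
  by (simp add: mat_unit_def)

lemma mat_unit_index [simp]:
  "a < n \<Longrightarrow> b < n \<Longrightarrow> mat_unit n i j $$ (a,b) = (if a = i \<and> b = j then 1 else 0)"
  by (simp add: mat_unit_def)

lemma id_map_mat_unit [simp]: "id_map n (mat_unit n i j) = mat_unit n i j"
  by (simp add: id_map_def)

lemma mtrace_mat_unit: "a < n \<Longrightarrow> mtrace n (mat_unit n a b) = (if a = b then 1 else 0)"
  by (cases "a = b") (auto simp: mtrace_def intro: sum.neutral)

definition mat_linear :: "nat \<Rightarrow> nat \<Rightarrow> (complex mat \<Rightarrow> complex mat) \<Rightarrow> bool" where
  "mat_linear n m f \<longleftrightarrow> (\<forall>A\<in>carrier_mat n n. f A \<in> carrier_mat m m) \<and>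
     (\<forall>A\<in>carrier_mat n n. \<forall>B\<in>carrier_mat n n. \<forall>c. f (c \<cdot>\<^sub>m A + B) = c \<cdot>\<^sub>m f A + f B)"

lemma mat_linear_carrier: "mat_linear n m f \<Longrightarrow> A \<in> carrier_mat n n \<Longrightarrow> f A \<in> carrier_mat m m"
  by (simp add: mat_linear_def)

lemma mat_linear_id_map: "mat_linear k k (id_map k)"
  unfolding mat_linear_def id_map_def by auto

lemma mat_linear_zero:
  assumes "mat_linear n m f"
  shows "f (0\<^sub>m n n) = 0\<^sub>m m m"
proof -
  have "(-1) \<cdot>\<^sub>m 0\<^sub>m n n + 0\<^sub>m n n = (0\<^sub>m n n :: complex mat)" by (rule eq_matI) auto
  then have "f (0\<^sub>m n n) = (-1) \<cdot>\<^sub>m f (0\<^sub>m n n) + f (0\<^sub>m n n)"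
    using assms unfolding mat_linear_def by (metis zero_carrier_mat)
  moreover have "(-1) \<cdot>\<^sub>m B + B = 0\<^sub>m m m" if "B \<in> carrier_mat m m" for B :: "complex mat"
    using that by (intro eq_matI) auto
  ultimately show ?thesis using mat_linear_carrier[OF assms] by (metis zero_carrier_mat)
qed

lemma mat_linear_expand:
  assumes f: "mat_linear n m f" and A: "A \<in> carrier_mat n n" and "p < m" "q < m"
  shows "f A $$ (p,q) = (\<Sum>i<n. \<Sum>j<n. A $$ (i,j) * f (mat_unit n i j) $$ (p,q))"
proof -
  let ?A = "\<lambda>T. mat n n (\<lambda>x. if x \<in> T then A $$ x else 0)"
  have partial: "f (?A T) $$ (p,q) = (\<Sum>x\<in>T. A $$ x * f (mat_unit n (fst x) (snd x)) $$ (p,q))"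
    if "T \<subseteq> {..<n} \<times> {..<n}" for T
  proof -
    have "finite T" using that finite_subset by blast
    then show ?thesis using that
    proof (induction T rule: finite_induct)
      case empty
      have "?A {} = 0\<^sub>m n n" by (rule eq_matI) auto
      then show ?case using mat_linear_zero[OF f] \<open>p < m\<close> \<open>q < m\<close> by simp
    next
      case (insert x T)
      obtain i j where x: "x = (i,j)" and "i < n" "j < n" using insert.prems by auto
      have "?A (insert x T) = (A $$ x) \<cdot>\<^sub>m mat_unit n i j + ?A T"
        by (rule eq_matI) (use insert x in \<open>auto simp: mat_unit_def\<close>)
      then have "f (?A (insert x T)) = (A $$ x) \<cdot>\<^sub>m f (mat_unit n i j) + f (?A T)"
        using f unfolding mat_linear_def by auto
      moreover have "f (mat_unit n i j) \<in> carrier_mat m m" "f (?A T) \<in> carrier_mat m m"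
        using mat_linear_carrier[OF f] by auto
      ultimately show ?case
        using insert x \<open>p < m\<close> \<open>q < m\<close> by simp
    qed
  qed
  have "?A ({..<n} \<times> {..<n}) = A" by (rule eq_matI) (use A in auto)
  then show ?thesis using partial[OF order_refl] by (simp add: sum_lessThan_Times)
qed

lemma tens_map_carrier [simp]: "tens_map n1 m1 f n2 m2 g A \<in> carrier_mat (m1*m2) (m1*m2)"
  by (simp add: tens_map_def)

lemma tens_map_dim [simp]:
  "dim_row (tens_map n1 m1 f n2 m2 g A) = m1*m2" "dim_col (tens_map n1 m1 f n2 m2 g A) = m1*m2"
  by (simp_all add: tens_map_def)

lemma tens_map_outside:
  "A \<notin> carrier_mat (n1*n2) (n1*n2) \<Longrightarrow> tens_map n1 m1 f n2 m2 g A = 0\<^sub>m (m1*m2) (m1*m2)"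
  by (simp add: tens_map_def)

lemma tens_map_index:
  "A \<in> carrier_mat (n1*n2) (n1*n2) \<Longrightarrow> P < m1*m2 \<Longrightarrow> Q < m1*m2 \<Longrightarrow>
   tens_map n1 m1 f n2 m2 g A $$ (P,Q) = (\<Sum>i<n1. \<Sum>j<n1. \<Sum>k<n2. \<Sum>l<n2.
      A $$ (i*n2+k, j*n2+l) * f (mat_unit n1 i j) $$ (P div m2, Q div m2)
                           * g (mat_unit n2 k l) $$ (P mod m2, Q mod m2))"
  by (simp add: tens_map_def)

lemma tens_map_cong:
  assumes "\<And>i j. i < n1 \<Longrightarrow> j < n1 \<Longrightarrow> f (mat_unit n1 i j) = f' (mat_unit n1 i j)"
    and "\<And>i j. i < n2 \<Longrightarrow> j < n2 \<Longrightarrow> g (mat_unit n2 i j) = g' (mat_unit n2 i j)"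
  shows "tens_map n1 m1 f n2 m2 g A = tens_map n1 m1 f' n2 m2 g' A"
  unfolding tens_map_def using assms by (auto intro!: sum.cong eq_matI)

lemma mat_linear_tens_map: "mat_linear (n1*n2) (m1*m2) (tens_map n1 m1 f n2 m2 g)"
  unfolding mat_linear_def
proof (intro conjI ballI allI)
  fix A B :: "complex mat" and c :: complex
  assume A: "A \<in> carrier_mat (n1*n2) (n1*n2)" and B: "B \<in> carrier_mat (n1*n2) (n1*n2)"
  have idx: "i*n2+k < n1*n2" if "i < n1" "k < n2" for i k using mult_add_less_mult that by auto
  show "tens_map n1 m1 f n2 m2 g (c \<cdot>\<^sub>m A + B) =
        c \<cdot>\<^sub>m tens_map n1 m1 f n2 m2 g A + tens_map n1 m1 f n2 m2 g B"
  proof (rule eq_matI)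
    fix P Q assume "P < dim_row (c \<cdot>\<^sub>m tens_map n1 m1 f n2 m2 g A + tens_map n1 m1 f n2 m2 g B)"
      "Q < dim_col (c \<cdot>\<^sub>m tens_map n1 m1 f n2 m2 g A + tens_map n1 m1 f n2 m2 g B)"
    then show "tens_map n1 m1 f n2 m2 g (c \<cdot>\<^sub>m A + B) $$ (P,Q) =
               (c \<cdot>\<^sub>m tens_map n1 m1 f n2 m2 g A + tens_map n1 m1 f n2 m2 g B) $$ (P,Q)"
      using A B idx
      by (simp add: tens_map_index sum_distrib_left sum.distrib[symmetric] ring_distribs mult_ac)
  qed auto
qed simp

lemma tens_map_id_right_index:
  assumes "A \<in> carrier_mat (n*k) (n*k)" "P < m*k" "Q < m*k"
  shows "tens_map n m f k k (id_map k) A $$ (P,Q) =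
    (\<Sum>i<n. \<Sum>j<n. A $$ (i*k + P mod k, j*k + Q mod k) * f (mat_unit n i j) $$ (P div k, Q div k))"
  using assms mod_less_of_less_mult[OF assms(2)] mod_less_of_less_mult[OF assms(3)]
  by (simp add: tens_map_index if_distrib[of "\<lambda>x. _ * x"] sum_sum_delta cong: if_cong)

lemma tens_map_id_left_index:
  assumes "A \<in> carrier_mat (n*k) (n*k)" "P < n*m" "Q < n*m"
  shows "tens_map n n (id_map n) k m g A $$ (P,Q) =
    (\<Sum>c<k. \<Sum>d<k. A $$ ((P div m)*k + c, (Q div m)*k + d) * g (mat_unit k c d) $$ (P mod m, Q mod m))"
proof -
  have lt: "P div m < n" "Q div m < n" using assms less_mult_imp_div_less by auto
  then have "tens_map n n (id_map n) k m g A $$ (P,Q) = (\<Sum>i<n. \<Sum>j<n. if P div m = i \<and> Q div m = j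
      then \<Sum>c<k. \<Sum>d<k. A $$ (i*k + c, j*k + d) * g (mat_unit k c d) $$ (P mod m, Q mod m) else 0)"
    using assms by (simp add: tens_map_index, intro sum.cong refl) auto
  then show ?thesis using lt by (simp add: sum_sum_delta)
qed

lemma tens_map_id_id:
  assumes A: "A \<in> carrier_mat (k*j) (k*j)"
  shows "tens_map k k (id_map k) j j (id_map j) A = A"
proof (rule eq_matI)
  fix P Q assume "P < dim_row A" "Q < dim_col A"
  then have P: "P < k*j" and Q: "Q < k*j" using A by auto
  then have "P div j < k" "Q div j < k" "P mod j < j" "Q mod j < j"
    by (auto simp: less_mult_imp_div_less mod_less_of_less_mult)
  then show "tens_map k k (id_map k) j j (id_map j) A $$ (P,Q) = A $$ (P,Q)"
    using tens_map_id_right_index[OF A P Q, of "id_map k"]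
    by (simp add: if_distrib[of "\<lambda>x. _ * x"] sum_sum_delta eq_commute[of _ "_ div j"] cong: if_cong)
qed (use A in auto)

lemma tens_map_comp:
  assumes f1: "mat_linear m1 m1' f1" and g1: "mat_linear m2 m2' g1"
    and f2: "\<And>i j. i < n1 \<Longrightarrow> j < n1 \<Longrightarrow> f2 (mat_unit n1 i j) \<in> carrier_mat m1 m1"
    and g2: "\<And>i j. i < n2 \<Longrightarrow> j < n2 \<Longrightarrow> g2 (mat_unit n2 i j) \<in> carrier_mat m2 m2"
    and A: "A \<in> carrier_mat (n1*n2) (n1*n2)"
  shows "tens_map m1 m1' f1 m2 m2' g1 (tens_map n1 m1 f2 n2 m2 g2 A) =
         tens_map n1 m1' (\<lambda>B. f1 (f2 B)) n2 m2' (\<lambda>B. g1 (g2 B)) A"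
proof (rule eq_matI)
  let ?C = "tens_map n1 m1' (\<lambda>B. f1 (f2 B)) n2 m2' (\<lambda>B. g1 (g2 B)) A"
  fix P Q assume "P < dim_row ?C" "Q < dim_col ?C"
  then have P: "P < m1'*m2'" and Q: "Q < m1'*m2'" by auto
  define x y x' y' where "x = P div m2'" "y = Q div m2'" "x' = P mod m2'" "y' = Q mod m2'"
  have xy: "x < m1'" "y < m1'" "x' < m2'" "y' < m2'"
    using P Q unfolding x_y_x'_y'_def by (auto simp: less_mult_imp_div_less mod_less_of_less_mult)
  let ?B = "tens_map n1 m1 f2 n2 m2 g2 A"
  let ?I1 = "{..<n1} \<times> {..<n1}" and ?I2 = "{..<n2} \<times> {..<n2}"
  let ?J1 = "{..<m1} \<times> {..<m1}" and ?J2 = "{..<m2} \<times> {..<m2}"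
  let ?\<alpha> = "\<lambda>s t. A $$ (fst s * n2 + fst t, snd s * n2 + snd t)"
  let ?F = "\<lambda>s u. f2 (mat_unit n1 (fst s) (snd s)) $$ u"
  let ?G = "\<lambda>t v. g2 (mat_unit n2 (fst t) (snd t)) $$ v"
  let ?X = "\<lambda>u. f1 (mat_unit m1 (fst u) (snd u)) $$ (x, y)"
  let ?Y = "\<lambda>v. g1 (mat_unit m2 (fst v) (snd v)) $$ (x', y')"
  have B: "?B $$ (fst u * m2 + fst v, snd u * m2 + snd v) = (\<Sum>s\<in>?I1. \<Sum>t\<in>?I2. ?\<alpha> s t * ?F s u * ?G t v)"
    if "u \<in> ?J1" "v \<in> ?J2" for u v
    using A that mult_add_less_mult
    by (auto simp: tens_map_index mem_Times_iff sum_lessThan_Times intro!: sum.cong)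
  have "tens_map m1 m1' f1 m2 m2' g1 ?B $$ (P,Q) =
        (\<Sum>u\<in>?J1. \<Sum>v\<in>?J2. ?B $$ (fst u * m2 + fst v, snd u * m2 + snd v) * ?X u * ?Y v)"
    using P Q by (simp add: tens_map_index x_y_x'_y'_def sum_lessThan_Times)
  also have "\<dots> = (\<Sum>u\<in>?J1. \<Sum>v\<in>?J2. (\<Sum>s\<in>?I1. \<Sum>t\<in>?I2. ?\<alpha> s t * ?F s u * ?G t v) * ?X u * ?Y v)"
    using B by (intro sum.cong refl) auto
  also have "\<dots> = (\<Sum>s\<in>?I1. \<Sum>t\<in>?I2. ?\<alpha> s t * (\<Sum>u\<in>?J1. ?F s u * ?X u) * (\<Sum>v\<in>?J2. ?G t v * ?Y v))"
    by (rule sum_rearrange_product)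
  also have "\<dots> = (\<Sum>s\<in>?I1. \<Sum>t\<in>?I2. ?\<alpha> s t *
      f1 (f2 (mat_unit n1 (fst s) (snd s))) $$ (x,y) * g1 (g2 (mat_unit n2 (fst t) (snd t))) $$ (x',y'))"
    using mat_linear_expand[OF f1 f2 xy(1,2)] mat_linear_expand[OF g1 g2 xy(3,4)]
    by (intro sum.cong refl) (auto simp: sum_lessThan_Times)
  also have "\<dots> = ?C $$ (P,Q)"
    using A P Q by (simp add: tens_map_index sum_lessThan_Times x_y_x'_y'_def)
  finally show "tens_map m1 m1' f1 m2 m2' g1 ?B $$ (P,Q) = ?C $$ (P,Q)" .
qed auto

lemma tens_map_id_right_unit_index:
  assumes "a < n" "c < k" "b < n" "d < k" "x < m*k" "y < m*k"
  shows "tens_map n m f k k (id_map k) (mat_unit (n*k) (a*k+c) (b*k+d)) $$ (x,y) =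
    (if x mod k = c \<and> y mod k = d then f (mat_unit n a b) $$ (x div k, y div k) else 0)"
proof -
  have xy: "x mod k < k" "y mod k < k" using assms mod_less_of_less_mult by auto
  have "i*k + x mod k < n*k" "j*k + y mod k < n*k" if "i < n" "j < n" for i j
    using that xy mult_add_less_mult by auto
  then have "tens_map n m f k k (id_map k) (mat_unit (n*k) (a*k+c) (b*k+d)) $$ (x,y) =
    (\<Sum>i<n. \<Sum>j<n. if a = i \<and> b = j then
       (if x mod k = c \<and> y mod k = d then f (mat_unit n i j) $$ (x div k, y div k) else 0) else 0)"
    using assms xy by (simp add: tens_map_id_right_index mult_add_eq_iff, intro sum.cong refl) auto
  then show ?thesis using assms by (simp add: sum_sum_delta)
qed

lemma tens_map_id_assoc:
  assumes A: "A \<in> carrier_mat (n*k*j) (n*k*j)"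
  shows "tens_map (n*k) (m*k) (tens_map n m f k k (id_map k)) j j (id_map j) A =
         tens_map n m f (k*j) (k*j) (id_map (k*j)) A"
proof (rule eq_matI)
  let ?C = "tens_map n m f (k*j) (k*j) (id_map (k*j)) A"
  fix P Q assume "P < dim_row ?C" "Q < dim_col ?C"
  then have P: "P < m*k*j" and Q: "Q < m*k*j" by (auto simp: mult.assoc)
  define x y where "x = P div j" "y = Q div j"
  have xy: "x < m*k" "y < m*k" using P Q less_mult_imp_div_less unfolding x_y_def by auto
  then have xy': "x mod k < k" "y mod k < k" using mod_less_of_less_mult by auto
  have "tens_map (n*k) (m*k) (tens_map n m f k k (id_map k)) j j (id_map j) A $$ (P,Q) =
    (\<Sum>I<n*k. \<Sum>J<n*k. A $$ (I*j + P mod j, J*j + Q mod j) *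
       tens_map n m f k k (id_map k) (mat_unit (n*k) I J) $$ (x, y))"
    using tens_map_id_right_index[OF A P Q] unfolding x_y_def by simp
  also have "\<dots> = (\<Sum>a<n. \<Sum>c<k. \<Sum>b<n. \<Sum>d<k. A $$ ((a*k+c)*j + P mod j, (b*k+d)*j + Q mod j) *
       (if x mod k = c \<and> y mod k = d then f (mat_unit n a b) $$ (x div k, y div k) else 0))"
    using xy by (simp add: sum_lessThan_mult tens_map_id_right_unit_index)
  also have "\<dots> = (\<Sum>a<n. \<Sum>b<n. \<Sum>c<k. \<Sum>d<k. A $$ ((a*k+c)*j + P mod j, (b*k+d)*j + Q mod j) *
       (if x mod k = c \<and> y mod k = d then f (mat_unit n a b) $$ (x div k, y div k) else 0))"
    by (rule sum.cong[OF refl], rule sum.swap)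
  also have "\<dots> = (\<Sum>a<n. \<Sum>b<n. A $$ ((a*k + x mod k)*j + P mod j, (b*k + y mod k)*j + Q mod j) *
       f (mat_unit n a b) $$ (x div k, y div k))"
    using xy' by (simp add: if_distrib[of "\<lambda>z. _ * z"] sum_sum_delta eq_commute[of _ "_ mod k"] cong: if_cong)
  also have "\<dots> = (\<Sum>a<n. \<Sum>b<n. A $$ (a*(k*j) + P mod (k*j), b*(k*j) + Q mod (k*j)) *
       f (mat_unit n a b) $$ (P div (k*j), Q div (k*j)))"
    unfolding x_y_def
    by (simp add: mod_mult2_eq div_mult2_eq mult.commute[of k j] algebra_simps)
  also have "\<dots> = ?C $$ (P,Q)"
    using tens_map_id_right_index[of A n "k*j" P m Q f] A P Q by (simp add: mult.assoc)
  finally show "tens_map (n*k) (m*k) (tens_map n m f k k (id_map k)) j j (id_map j) A $$ (P,Q) = ?C $$ (P,Q)" .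
qed (auto simp: mult.assoc)

lemma mtrace_tens_map_id:
  assumes f: "mat_linear n m f" and tr: "\<And>A. A \<in> carrier_mat n n \<Longrightarrow> mtrace m (f A) = mtrace n A"
    and A: "A \<in> carrier_mat (n*k) (n*k)"
  shows "mtrace (m*k) (tens_map n m f k k (id_map k) A) = mtrace (n*k) A"
proof -
  have "mtrace (m*k) (tens_map n m f k k (id_map k) A) =
        (\<Sum>x<m. \<Sum>c<k. \<Sum>a<n. \<Sum>b<n. A $$ (a*k + c, b*k + c) * f (mat_unit n a b) $$ (x, x))"
    unfolding mtrace_def sum_lessThan_mult
    using A mult_add_less_mult by (intro sum.cong refl) (simp add: tens_map_id_right_index)
  also have "\<dots> = (\<Sum>c<k. \<Sum>a<n. \<Sum>b<n. A $$ (a*k + c, b*k + c) * mtrace m (f (mat_unit n a b)))"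
    unfolding mtrace_def sum_distrib_left by (simp only: sum.swap[where A = "{..<m}"])
  also have "\<dots> = (\<Sum>c<k. \<Sum>a<n. A $$ (a*k + c, a*k + c))"
    by (simp add: tr mtrace_mat_unit if_distrib[of "\<lambda>z. _ * z"] cong: if_cong)
  also have "\<dots> = mtrace (n*k) A"
    unfolding mtrace_def sum_lessThan_mult by (rule sum.swap)
  finally show ?thesis .
qed

section \<open>Quantum operations\<close>

lemma is_qopD:
  assumes "is_qop T"
  shows "0 < qin T" "0 < qout T" "mat_linear (qin T) (qout T) (qmap T)"
    "\<And>A. A \<in> carrier_mat (qin T) (qin T) \<Longrightarrow> qmap T A \<in> carrier_mat (qout T) (qout T)"
    "\<And>A. A \<in> carrier_mat (qin T) (qin T) \<Longrightarrow> mtrace (qout T) (qmap T A) = mtrace (qin T) A"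
    "\<And>k A. 0 < k \<Longrightarrow> psd (qin T * k) A \<Longrightarrow>
       psd (qout T * k) (tens_map (qin T) (qout T) (qmap T) k k (id_map k) A)"
  using assms unfolding is_qop_def mat_linear_def Let_def by auto

lemma is_qopI:
  assumes "0 < qin T" "0 < qout T" "mat_linear (qin T) (qout T) (qmap T)"
    "\<And>A. A \<notin> carrier_mat (qin T) (qin T) \<Longrightarrow> qmap T A = 0\<^sub>m (qout T) (qout T)"
    "\<And>A. A \<in> carrier_mat (qin T) (qin T) \<Longrightarrow> mtrace (qout T) (qmap T A) = mtrace (qin T) A"
    "\<And>k A. 0 < k \<Longrightarrow> psd (qin T * k) A \<Longrightarrow>
       psd (qout T * k) (tens_map (qin T) (qout T) (qmap T) k k (id_map k) A)"
  shows "is_qop T"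
  using assms unfolding is_qop_def mat_linear_def Let_def by auto

lemma psd_carrier: "psd n A \<Longrightarrow> A \<in> carrier_mat n n"
  by (simp add: psd_def)

lemma psd_reindex:
  assumes B: "psd n B" and \<rho>: "bij_betw \<rho> {..<n} {..<n}"
  shows "psd n (mat n n (\<lambda>(P,Q). B $$ (\<rho> P, \<rho> Q)))"
  unfolding psd_def
proof (intro conjI allI)
  fix v :: "nat \<Rightarrow> complex"
  define w where "w = v \<circ> inv_into {..<n} \<rho>"
  have v: "v i = w (\<rho> i)" if "i < n" for i
    using that \<rho> by (simp add: w_def bij_betw_def)
  have "(\<Sum>i<n. \<Sum>j<n. cnj (v i) * mat n n (\<lambda>(P,Q). B $$ (\<rho> P, \<rho> Q)) $$ (i,j) * v j) =
        (\<Sum>i<n. \<Sum>j<n. cnj (w (\<rho> i)) * B $$ (\<rho> i, \<rho> j) * w (\<rho> j))"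
    by (simp add: v)
  also have "\<dots> = (\<Sum>i<n. \<Sum>j<n. cnj (w i) * B $$ (i, j) * w j)"
    using sum.reindex_bij_betw[OF \<rho>, of "\<lambda>i. \<Sum>j<n. cnj (w i) * B $$ (i, j) * w j"]
          sum.reindex_bij_betw[OF \<rho>, of "\<lambda>j. cnj (w _) * B $$ (_, j) * w j"]
    by simp
  finally show "let z = \<Sum>i<n. \<Sum>j<n. cnj (v i) * mat n n (\<lambda>(P,Q). B $$ (\<rho> P, \<rho> Q)) $$ (i,j) * v j
         in Im z = 0 \<and> 0 \<le> Re z"
    using B unfolding psd_def Let_def by metis
qed simp

lemma is_qop_qid: "0 < k \<Longrightarrow> is_qop (qid k)"
  by (rule is_qopI) (auto simp: qid_def id_map_def mat_linear_id_map tens_map_id_id psd_carrier)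

lemma qcomp_simps [simp]: "qin (qcomp F T) = qin T" "qout (qcomp F T) = qout F"
  by (simp_all add: qcomp_def)

lemma is_qop_qcomp:
  assumes F: "is_qop F" and T: "is_qop T" and "qin F = qout T"
  shows "is_qop (qcomp F T)"
proof (rule is_qopI)
  let ?n = "qin T" and ?m = "qout T" and ?m' = "qout F"
  have lF: "mat_linear ?m ?m' (qmap F)" and lT: "mat_linear ?n ?m (qmap T)"
    using is_qopD(3)[OF F] is_qopD(3)[OF T] \<open>qin F = qout T\<close> by auto
  then show "mat_linear (qin (qcomp F T)) (qout (qcomp F T)) (qmap (qcomp F T))"
    unfolding mat_linear_def qcomp_def by auto
  show "0 < qin (qcomp F T)" "0 < qout (qcomp F T)" using is_qopD(1,2) F T by auto
  show "qmap (qcomp F T) A = 0\<^sub>m (qout (qcomp F T)) (qout (qcomp F T))"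
    if "A \<notin> carrier_mat (qin (qcomp F T)) (qin (qcomp F T))" for A
    using that by (simp add: qcomp_def)
  show "mtrace (qout (qcomp F T)) (qmap (qcomp F T) A) = mtrace (qin (qcomp F T)) A"
    if "A \<in> carrier_mat (qin (qcomp F T)) (qin (qcomp F T))" for A
    using that is_qopD(4,5)[OF F] is_qopD(4,5)[OF T] \<open>qin F = qout T\<close> by (simp add: qcomp_def)
  fix k A assume k: "0 < k" and A: "psd (qin (qcomp F T) * k) A"
  then have "A \<in> carrier_mat (?n*k) (?n*k)" using psd_carrier by simp
  then have "tens_map ?n ?m' (qmap (qcomp F T)) k k (id_map k) A =
        tens_map ?m ?m' (qmap F) k k (id_map k) (tens_map ?n ?m (qmap T) k k (id_map k) A)"
    by (subst tens_map_comp[OF lF mat_linear_id_map]) (auto simp: qcomp_def intro: tens_map_cong mat_linear_carrier[OF lT])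
  moreover have "psd (?m*k) (tens_map ?n ?m (qmap T) k k (id_map k) A)"
    using is_qopD(6)[OF T k] A by simp
  ultimately show "psd (qout (qcomp F T) * k)
      (tens_map (qin (qcomp F T)) (qout (qcomp F T)) (qmap (qcomp F T)) k k (id_map k) A)"
    using is_qopD(6)[OF F k] \<open>qin F = qout T\<close> by simp
qed

lemma qid_simps [simp]: "qin (qid k) = k" "qout (qid k) = k"
  by (simp_all add: qid_def)

lemma qtens_simps [simp]:
  "qin (qtens T F) = qin T * qin F" "qout (qtens T F) = qout T * qout F"
  by (simp_all add: qtens_def)

lemma qmap_qtens_qid [simp]:
  "qmap (qtens T (qid k)) = tens_map (qin T) (qout T) (qmap T) k k (id_map k)"
  by (simp add: qtens_def qid_def)

lemma is_qop_qtens_qid: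
  assumes T: "is_qop T" and k: "0 < k"
  shows "is_qop (qtens T (qid k))"
proof (rule is_qopI, unfold qtens_simps qid_simps qmap_qtens_qid)
  show "0 < qin T * k" "0 < qout T * k" using is_qopD(1,2)[OF T] k by auto
  show "mat_linear (qin T * k) (qout T * k) (tens_map (qin T) (qout T) (qmap T) k k (id_map k))"
    by (rule mat_linear_tens_map)
  show "tens_map (qin T) (qout T) (qmap T) k k (id_map k) A = 0\<^sub>m (qout T * k) (qout T * k)"
    if "A \<notin> carrier_mat (qin T * k) (qin T * k)" for A
    using that by (rule tens_map_outside)
  show "mtrace (qout T * k) (tens_map (qin T) (qout T) (qmap T) k k (id_map k) A) = mtrace (qin T * k) A"
    if "A \<in> carrier_mat (qin T * k) (qin T * k)" for A
    using mtrace_tens_map_id[OF is_qopD(3)[OF T] is_qopD(5)[OF T] that] .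
  fix j A assume j: "0 < j" and A: "psd (qin T * k * j) A"
  then have "psd (qout T * (k*j)) (tens_map (qin T) (qout T) (qmap T) (k*j) (k*j) (id_map (k*j)) A)"
    using is_qopD(6)[OF T, of "k*j" A] k by (simp add: mult.assoc)
  then show "psd (qout T * k * j)
      (tens_map (qin T * k) (qout T * k) (tens_map (qin T) (qout T) (qmap T) k k (id_map k)) j j (id_map j) A)"
    using A by (simp add: tens_map_id_assoc psd_carrier mult.assoc)
qed

definition qperm :: "nat \<Rightarrow> (nat \<Rightarrow> nat) \<Rightarrow> qop" where
  "qperm n \<rho> = \<lparr> qin = n, qout = n,
     qmap = (\<lambda>A. if A \<in> carrier_mat n n then mat n n (\<lambda>(P,Q). A $$ (\<rho> P, \<rho> Q)) else 0\<^sub>m n n) \<rparr>"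

lemma qperm_simps [simp]: "qin (qperm n \<rho>) = n" "qout (qperm n \<rho>) = n"
  by (simp_all add: qperm_def)

lemma qperm_carrier [simp]: "qmap (qperm n \<rho>) A \<in> carrier_mat n n"
  by (simp add: qperm_def)

lemma qperm_index:
  "A \<in> carrier_mat n n \<Longrightarrow> P < n \<Longrightarrow> Q < n \<Longrightarrow> qmap (qperm n \<rho>) A $$ (P,Q) = A $$ (\<rho> P, \<rho> Q)"
  by (simp add: qperm_def)

lemma tens_map_qperm_id_index:
  assumes \<rho>: "\<And>i. i < n \<Longrightarrow> \<rho> i < n"
    and A: "A \<in> carrier_mat (n*j) (n*j)" and P: "P < n*j" and Q: "Q < n*j"
  shows "tens_map n n (qmap (qperm n \<rho>)) j j (id_map j) A $$ (P,Q) =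
         A $$ (\<rho> (P div j) * j + P mod j, \<rho> (Q div j) * j + Q mod j)"
proof -
  have "P div j < n" "Q div j < n" using P Q less_mult_imp_div_less by auto
  then have "tens_map n n (qmap (qperm n \<rho>)) j j (id_map j) A $$ (P,Q) = (\<Sum>I<n. \<Sum>J<n.
      if \<rho> (P div j) = I \<and> \<rho> (Q div j) = J then A $$ (I*j + P mod j, J*j + Q mod j) else 0)"
    using \<rho> by (simp add: tens_map_id_right_index[OF A P Q] qperm_def, intro sum.cong refl) auto
  then show ?thesis using \<rho> \<open>P div j < n\<close> \<open>Q div j < n\<close> by (simp add: sum_sum_delta)
qed

lemma is_qop_qperm:
  assumes "0 < n" and \<rho>: "bij_betw \<rho> {..<n} {..<n}"
  shows "is_qop (qperm n \<rho>)"
proof (rule is_qopI, unfold qperm_simps)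
  have \<rho>_less: "\<And>i. i < n \<Longrightarrow> \<rho> i < n" using bij_betw_apply[OF \<rho>] by auto
  show "0 < n" "0 < n" by fact+
  show "mat_linear n n (qmap (qperm n \<rho>))"
    unfolding mat_linear_def qperm_def using \<rho>_less by (auto intro!: eq_matI)
  show "qmap (qperm n \<rho>) A = 0\<^sub>m n n" if "A \<notin> carrier_mat n n" for A
    using that by (simp add: qperm_def)
  show "mtrace n (qmap (qperm n \<rho>) A) = mtrace n A" if "A \<in> carrier_mat n n" for A
    using that \<rho>_less sum.reindex_bij_betw[OF \<rho>, of "\<lambda>P. A $$ (P,P)"]
    by (simp add: mtrace_def qperm_index)
  fix j A assume "0 < j" and A: "psd (n*j) A"
  let ?\<sigma> = "\<lambda>P. \<rho> (P div j) * j + P mod j"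
  have "tens_map n n (qmap (qperm n \<rho>)) j j (id_map j) A = mat (n*j) (n*j) (\<lambda>(P,Q). A $$ (?\<sigma> P, ?\<sigma> Q))"
    using psd_carrier[OF A] by (intro eq_matI) (auto simp: tens_map_qperm_id_index[OF \<rho>_less])
  then show "psd (n*j) (tens_map n n (qmap (qperm n \<rho>)) j j (id_map j) A)"
    using psd_reindex[OF A bij_betw_block_index[OF \<rho>]] by simp
qed

text \<open>For \<open>c < a\<close> and \<open>K < b\<close>, sends the index \<open>K * a + c\<close> of the pair \<open>(K, c)\<close> of a
  \<open>b \<times> a\<close> system to the index \<open>c * b + K\<close> of \<open>(c, K)\<close> in the swapped \<open>a \<times> b\<close> system.\<close>
definition swap_index :: "nat \<Rightarrow> nat \<Rightarrow> nat \<Rightarrow> nat" where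
  "swap_index a b P = (P mod a) * b + P div a"

lemma swap_index_mult_add [simp]: "c < a \<Longrightarrow> swap_index a b (K * a + c) = c * b + K"
  by (simp add: swap_index_def)

lemma swap_index_less: "P < b*a \<Longrightarrow> swap_index a b P < a*b"
  using mult_add_less_mult[of "P mod a" a "P div a" b] less_mult_imp_div_less[of P b a]
    mod_less_of_less_mult[of P b a]
  by (simp add: swap_index_def)

lemma swap_index_swap_index: "P < b*a \<Longrightarrow> swap_index b a (swap_index a b P) = P"
  using less_mult_imp_div_less[of P b a] by (simp add: swap_index_def add.commute)

lemma bij_betw_swap_index: "bij_betw (swap_index a b) {..<b*a} {..<a*b}"
  by (rule bij_betw_byWitness[where f' = "swap_index b a"])
    (auto simp: swap_index_less swap_index_swap_index)

lemma qtens_eq_qcomp: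
  assumes T: "is_qop T" and F: "is_qop F"
  shows "qtens T F = qcomp (qtens (qid (qout T)) F) (qtens T (qid (qin F)))"
proof -
  let ?n1 = "qin T" and ?m1 = "qout T" and ?n2 = "qin F" and ?m2 = "qout F"
  have "tens_map ?m1 ?m1 (id_map ?m1) ?n2 ?m2 (qmap F) (tens_map ?n1 ?m1 (qmap T) ?n2 ?n2 (id_map ?n2) A) =
        tens_map ?n1 ?m1 (qmap T) ?n2 ?m2 (qmap F) A"
    if A: "A \<in> carrier_mat (?n1 * ?n2) (?n1 * ?n2)" for A
    using is_qopD(4)[OF T]
    by (subst tens_map_comp[OF mat_linear_id_map is_qopD(3)[OF F] _ _ A])
       (auto simp: id_map_def intro: tens_map_cong)
  then show ?thesis
    unfolding qtens_def qcomp_def qid_def by (auto simp: tens_map_outside fun_eq_iff)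
qed

lemma qtens_qid_left_eq:
  assumes F: "is_qop F"
  shows "qtens (qid n) F = qcomp (qperm (n * qout F) (swap_index (qout F) n))
           (qcomp (qtens F (qid n)) (qperm (n * qin F) (swap_index n (qin F))))"
proof -
  let ?k = "qin F" and ?m = "qout F"
  let ?S = "qmap (qperm (n * ?m) (swap_index ?m n))" and ?S' = "qmap (qperm (n * ?k) (swap_index n ?k))"
  let ?FI = "tens_map ?k ?m (qmap F) n n (id_map n)"
  have key: "tens_map n n (id_map n) ?k ?m (qmap F) A = ?S (?FI (?S' A))"
    if A: "A \<in> carrier_mat (n * ?k) (n * ?k)" for A
  proof (rule eq_matI)
    have B: "?S' A \<in> carrier_mat (?k * n) (?k * n)"
      using qperm_carrier by (metis mult.commute)
    have FI: "?FI (?S' A) \<in> carrier_mat (n * ?m) (n * ?m)"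
      using tens_map_carrier by (metis mult.commute)
    fix P Q assume "P < dim_row (?S (?FI (?S' A)))" "Q < dim_col (?S (?FI (?S' A)))"
    then have P: "P < n * ?m" and Q: "Q < n * ?m" using qperm_carrier by (metis carrier_matD)+
    have PQ: "P div ?m < n" "Q div ?m < n" "P mod ?m < ?m" "Q mod ?m < ?m"
      using P Q by (auto simp: less_mult_imp_div_less mod_less_of_less_mult)
    have R: "swap_index ?m n P < ?m * n" "swap_index ?m n Q < ?m * n"
      using P Q swap_index_less by (auto simp: mult.commute)
    have "?S (?FI (?S' A)) $$ (P,Q) = ?FI (?S' A) $$ (swap_index ?m n P, swap_index ?m n Q)"
      using P Q FI by (simp add: qperm_index)
    also have "\<dots> = (\<Sum>K<?k. \<Sum>L<?k. ?S' A $$ (K*n + P div ?m, L*n + Q div ?m) *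
                       qmap F (mat_unit ?k K L) $$ (P mod ?m, Q mod ?m))"
      using tens_map_id_right_index[OF B R] PQ by (simp add: swap_index_def)
    also have "\<dots> = (\<Sum>K<?k. \<Sum>L<?k. A $$ ((P div ?m)*?k + K, (Q div ?m)*?k + L) *
                       qmap F (mat_unit ?k K L) $$ (P mod ?m, Q mod ?m))"
      using A PQ mult_add_less_mult[of _ ?k _ n]
      by (intro sum.cong refl) (simp add: qperm_index mult.commute[of ?k n])
    also have "\<dots> = tens_map n n (id_map n) ?k ?m (qmap F) A $$ (P,Q)"
      using tens_map_id_left_index[OF A P Q] by simp
    finally show "tens_map n n (id_map n) ?k ?m (qmap F) A $$ (P,Q) = ?S (?FI (?S' A)) $$ (P,Q)" ..
  qed (use qperm_carrier tens_map_dim in \<open>metis carrier_matD mult.commute\<close>)+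
  show ?thesis
    unfolding qtens_def qcomp_def qid_def using key
    by (auto simp: tens_map_outside fun_eq_iff qperm_def mult.commute)
qed

lemma is_qop_qtens:
  assumes T: "is_qop T" and F: "is_qop F"
  shows "is_qop (qtens T F)"
proof -
  have pos: "0 < qin T" "0 < qout T" "0 < qin F" "0 < qout F" using is_qopD(1,2) T F by auto
  have "is_qop (qtens (qid (qout T)) F)"
    unfolding qtens_qid_left_eq[OF F]
    using bij_betw_swap_index[of "qout F" "qout T"] bij_betw_swap_index[of "qout T" "qin F"]
    by (intro is_qop_qcomp is_qop_qperm is_qop_qtens_qid F pos) (simp_all add: mult.commute pos)
  then show ?thesis
    unfolding qtens_eq_qcomp[OF T F]
    by (intro is_qop_qcomp is_qop_qtens_qid T pos) simp_all
qed

section \<open>Dephasing and free operations\<close>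

lemma deph_carrier [simp]: "deph n A \<in> carrier_mat n n"
  by (simp add: deph_def)

lemma deph_dim [simp]: "dim_row (deph n A) = n" "dim_col (deph n A) = n"
  by (simp_all add: deph_def)

lemma deph_index [simp]: "x < n \<Longrightarrow> y < n \<Longrightarrow> deph n A $$ (x,y) = (if x = y then A $$ (x,y) else 0)"
  by (simp add: deph_def)

lemma deph_idem [simp]: "deph n (deph n A) = deph n A"
  by (rule eq_matI) (auto simp: deph_def)

lemma deph_mat_unit: "deph n (mat_unit n i j) = (if i = j then mat_unit n i j else 0\<^sub>m n n)"
  by (rule eq_matI) (auto simp: deph_def mat_unit_def)

lemma free_iff:
  "free X T \<longleftrightarrow> is_qop T \<and> (\<forall>A\<in>carrier_mat (qin T) (qin T).
     (X = DI \<longrightarrow> deph (qout T) (qmap T A) = deph (qout T) (qmap T (deph (qin T) A))) \<and>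
     (X = CI \<longrightarrow> qmap T (deph (qin T) A) = deph (qout T) (qmap T (deph (qin T) A))) \<and>
     (X = DCI \<longrightarrow> deph (qout T) (qmap T A) = qmap T (deph (qin T) A)))"
  by (cases X) (auto simp: free_def Let_def)

lemma free_is_qop: "free X T \<Longrightarrow> is_qop T"
  by (simp add: free_iff)

lemma free_if_commutes_with_deph:
  assumes "is_qop T" and commute: "\<And>A. A \<in> carrier_mat (qin T) (qin T) \<Longrightarrow>
    deph (qout T) (qmap T A) = qmap T (deph (qin T) A)"
  shows "free X T"
proof -
  have "deph (qout T) (qmap T (deph (qin T) A)) = qmap T (deph (qin T) A)" for A
    using commute[of "deph (qin T) A"] by simp
  then show ?thesis using assms unfolding free_iff by simp
qed

lemma free_qid: "0 < k \<Longrightarrow> free X (qid k)"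
  by (rule free_if_commutes_with_deph[OF is_qop_qid]) (auto simp: qid_def id_map_def)

lemma free_qperm:
  assumes "0 < n" and \<rho>: "bij_betw \<rho> {..<n} {..<n}"
  shows "free X (qperm n \<rho>)"
proof (rule free_if_commutes_with_deph)
  show "is_qop (qperm n \<rho>)" using is_qop_qperm assms by auto
  have less: "\<And>P. P < n \<Longrightarrow> \<rho> P < n" and inj: "inj_on \<rho> {..<n}"
    using \<rho> by (auto simp: bij_betw_def)
  fix A :: "complex mat" assume A: "A \<in> carrier_mat (qin (qperm n \<rho>)) (qin (qperm n \<rho>))"
  show "deph (qout (qperm n \<rho>)) (qmap (qperm n \<rho>) A) = qmap (qperm n \<rho>) (deph (qin (qperm n \<rho>)) A)"
  proof (rule eq_matI)
    fix P Q assume "P < dim_row (qmap (qperm n \<rho>) (deph (qin (qperm n \<rho>)) A))"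
      "Q < dim_col (qmap (qperm n \<rho>) (deph (qin (qperm n \<rho>)) A))"
    then have "P < n" "Q < n" using qperm_carrier by (metis carrier_matD qperm_simps(1))+
    then show "deph (qout (qperm n \<rho>)) (qmap (qperm n \<rho>) A) $$ (P,Q) =
               qmap (qperm n \<rho>) (deph (qin (qperm n \<rho>)) A) $$ (P,Q)"
      using A less inj_onD[OF inj] by (auto simp: qperm_index)
  qed (use qperm_carrier in \<open>metis carrier_matD deph_carrier qperm_simps\<close>)+
qed

lemma deph_tens_map:
  assumes f: "\<And>i j. i < n1 \<Longrightarrow> j < n1 \<Longrightarrow> f (mat_unit n1 i j) \<in> carrier_mat m1 m1"
    and g: "\<And>i j. i < n2 \<Longrightarrow> j < n2 \<Longrightarrow> g (mat_unit n2 i j) \<in> carrier_mat m2 m2"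
  shows "deph (m1*m2) (tens_map n1 m1 f n2 m2 g A) =
         tens_map n1 m1 (\<lambda>B. deph m1 (f B)) n2 m2 (\<lambda>B. deph m2 (g B)) A"
proof (cases "A \<in> carrier_mat (n1*n2) (n1*n2)")
  case False
  then show ?thesis by (simp add: tens_map_outside) (rule eq_matI, auto simp: deph_def)
next
  case A: True
  show ?thesis
  proof (rule eq_matI)
    fix P Q assume "P < dim_row (tens_map n1 m1 (\<lambda>B. deph m1 (f B)) n2 m2 (\<lambda>B. deph m2 (g B)) A)"
      "Q < dim_col (tens_map n1 m1 (\<lambda>B. deph m1 (f B)) n2 m2 (\<lambda>B. deph m2 (g B)) A)"
    then have P: "P < m1*m2" and Q: "Q < m1*m2" by auto
    then have lt: "P div m2 < m1" "Q div m2 < m1" "P mod m2 < m2" "Q mod m2 < m2"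
      by (auto simp: less_mult_imp_div_less mod_less_of_less_mult)
    show "deph (m1*m2) (tens_map n1 m1 f n2 m2 g A) $$ (P,Q) =
          tens_map n1 m1 (\<lambda>B. deph m1 (f B)) n2 m2 (\<lambda>B. deph m2 (g B)) A $$ (P,Q)"
    proof (cases "P = Q")
      case True
      then show ?thesis using P Q A lt f g by (simp add: tens_map_index)
    next
      case False
      then have "P div m2 \<noteq> Q div m2 \<or> P mod m2 \<noteq> Q mod m2" by (metis div_mult_mod_eq)
      then have "tens_map n1 m1 (\<lambda>B. deph m1 (f B)) n2 m2 (\<lambda>B. deph m2 (g B)) A $$ (P,Q) = 0"
        unfolding tens_map_index[OF A P Q] by (intro sum.neutral ballI) (use lt f g in auto)
      then show ?thesis using False P Q by simp
    qed
  qed auto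
qed

lemma tens_map_deph:
  assumes f: "mat_linear n1 m1 f" and g: "mat_linear n2 m2 g" and A: "A \<in> carrier_mat (n1*n2) (n1*n2)"
  shows "tens_map n1 m1 f n2 m2 g (deph (n1*n2) A) =
         tens_map n1 m1 (\<lambda>B. f (deph n1 B)) n2 m2 (\<lambda>B. g (deph n2 B)) A"
proof (rule eq_matI)
  fix P Q assume "P < dim_row (tens_map n1 m1 (\<lambda>B. f (deph n1 B)) n2 m2 (\<lambda>B. g (deph n2 B)) A)"
      "Q < dim_col (tens_map n1 m1 (\<lambda>B. f (deph n1 B)) n2 m2 (\<lambda>B. g (deph n2 B)) A)"
  then have P: "P < m1*m2" and Q: "Q < m1*m2" by auto
  then have "P div m2 < m1" "Q div m2 < m1" "P mod m2 < m2" "Q mod m2 < m2"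
    by (auto simp: less_mult_imp_div_less mod_less_of_less_mult)
  then show "tens_map n1 m1 f n2 m2 g (deph (n1*n2) A) $$ (P,Q) =
             tens_map n1 m1 (\<lambda>B. f (deph n1 B)) n2 m2 (\<lambda>B. g (deph n2 B)) A $$ (P,Q)"
    using P Q A
    by (simp add: tens_map_index deph_mat_unit mat_linear_zero[OF f] mat_linear_zero[OF g]
        mult_add_less_mult mult_add_eq_iff, intro sum.cong refl,
        auto simp: mat_linear_zero[OF f] mat_linear_zero[OF g])
qed auto

lemma freeD:
  assumes "free X T" "A \<in> carrier_mat (qin T) (qin T)"
  shows "X = DI \<Longrightarrow> deph (qout T) (qmap T A) = deph (qout T) (qmap T (deph (qin T) A))"
    and "X = CI \<Longrightarrow> qmap T (deph (qin T) A) = deph (qout T) (qmap T (deph (qin T) A))"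
    and "X = DCI \<Longrightarrow> deph (qout T) (qmap T A) = qmap T (deph (qin T) A)"
  using assms unfolding free_iff by blast+

lemma free_qtens:
  assumes F: "free X F" and G: "free X G"
  shows "free X (qtens F G)"
proof -
  have qF: "is_qop F" and qG: "is_qop G" using F G by (simp_all add: free_is_qop)
  let ?n1 = "qin F" and ?m1 = "qout F" and ?n2 = "qin G" and ?m2 = "qout G"
  let ?f = "qmap F" and ?g = "qmap G"
  let ?f' = "\<lambda>B. ?f (deph ?n1 B)" and ?g' = "\<lambda>B. ?g (deph ?n2 B)"
  let ?tens = "\<lambda>f g. tens_map ?n1 ?m1 f ?n2 ?m2 g"
  have lf: "mat_linear ?n1 ?m1 ?f" and lg: "mat_linear ?n2 ?m2 ?g" using is_qopD(3) qF qG by auto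
  have out: "deph (?m1*?m2) (?tens ?f ?g A) = ?tens (\<lambda>B. deph ?m1 (?f B)) (\<lambda>B. deph ?m2 (?g B)) A"
    and out': "deph (?m1*?m2) (?tens ?f' ?g' A) = ?tens (\<lambda>B. deph ?m1 (?f' B)) (\<lambda>B. deph ?m2 (?g' B)) A"
    for A using mat_linear_carrier[OF lf] mat_linear_carrier[OF lg] by (auto intro!: deph_tens_map)
  note inn = tens_map_deph[OF lf lg]
  have T: "is_qop (qtens F G)" "qin (qtens F G) = ?n1 * ?n2" "qout (qtens F G) = ?m1 * ?m2"
    "qmap (qtens F G) = ?tens ?f ?g"
    using is_qop_qtens[OF qF qG] by (simp_all add: qtens_def)
  show ?thesis
  proof (cases X)
    case DI
    have "deph (?m1*?m2) (?tens ?f ?g A) = deph (?m1*?m2) (?tens ?f ?g (deph (?n1*?n2) A))"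
      if "A \<in> carrier_mat (?n1*?n2) (?n1*?n2)" for A
      unfolding inn[OF that] out out'
      by (intro tens_map_cong freeD(1)[OF F _ DI] freeD(1)[OF G _ DI] mat_unit_carrier)
    then show ?thesis unfolding DI free_def Let_def notion.case T by (intro conjI T(1) ballI)
  next
    case CI
    have "?tens ?f ?g (deph (?n1*?n2) A) = deph (?m1*?m2) (?tens ?f ?g (deph (?n1*?n2) A))"
      if "A \<in> carrier_mat (?n1*?n2) (?n1*?n2)" for A
      unfolding inn[OF that] out'
      by (intro tens_map_cong freeD(2)[OF F _ CI] freeD(2)[OF G _ CI] mat_unit_carrier)
    then show ?thesis unfolding CI free_def Let_def notion.case T by (intro conjI T(1) ballI)
  next
    case DCI
    have "deph (?m1*?m2) (?tens ?f ?g A) = ?tens ?f ?g (deph (?n1*?n2) A)"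
      if "A \<in> carrier_mat (?n1*?n2) (?n1*?n2)" for A
      unfolding inn[OF that] out
      by (intro tens_map_cong freeD(3)[OF F _ DCI] freeD(3)[OF G _ DCI] mat_unit_carrier)
    then show ?thesis unfolding DCI free_def Let_def notion.case T by (intro conjI T(1) ballI)
  qed
qed

section \<open>Free super-operations\<close>

definition elementary_monotone :: "notion \<Rightarrow> (qop \<Rightarrow> real) \<Rightarrow> bool" where
  "elementary_monotone X M \<longleftrightarrow>
    (\<forall>\<Theta> \<Phi>. is_qop \<Theta> \<longrightarrow> free X \<Phi> \<longrightarrow> qin \<Phi> = qout \<Theta> \<longrightarrow> M (qcomp \<Phi> \<Theta>) \<le> M \<Theta>) \<and>
    (\<forall>\<Theta> \<Phi>. is_qop \<Theta> \<longrightarrow> free X \<Phi> \<longrightarrow> qout \<Phi> = qin \<Theta> \<longrightarrow> M (qcomp \<Theta> \<Phi>) \<le> M \<Theta>) \<and>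
    (\<forall>\<Theta> k. is_qop \<Theta> \<longrightarrow> 0 < k \<longrightarrow> M (qtens \<Theta> (qid k)) \<le> M \<Theta>)"

lemma elementary_monotoneD:
  assumes "elementary_monotone X M"
  shows "is_qop \<Theta> \<Longrightarrow> free X \<Phi> \<Longrightarrow> qin \<Phi> = qout \<Theta> \<Longrightarrow> M (qcomp \<Phi> \<Theta>) \<le> M \<Theta>"
    and "is_qop \<Theta> \<Longrightarrow> free X \<Phi> \<Longrightarrow> qout \<Phi> = qin \<Theta> \<Longrightarrow> M (qcomp \<Theta> \<Phi>) \<le> M \<Theta>"
    and "is_qop \<Theta> \<Longrightarrow> 0 < k \<Longrightarrow> M (qtens \<Theta> (qid k)) \<le> M \<Theta>"
  using assms unfolding elementary_monotone_def by blast+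

lemma qtens_free_right_mono:
  assumes M: "elementary_monotone X M" and T: "is_qop T" and P: "free X P"
  shows "M (qtens T P) \<le> M T"
proof -
  have pos: "0 < qin P" "0 < qout T" using is_qopD(1,2) free_is_qop[OF P] T by auto
  have "M (qtens T P) = M (qcomp (qtens (qid (qout T)) P) (qtens T (qid (qin P))))"
    using qtens_eq_qcomp[OF T free_is_qop[OF P]] by simp
  also have "\<dots> \<le> M (qtens T (qid (qin P)))"
    using elementary_monotoneD(1)[OF M is_qop_qtens_qid[OF T]] free_qtens[OF free_qid P] pos by simp
  also have "\<dots> \<le> M T" using elementary_monotoneD(3)[OF M T] pos by simp
  finally show ?thesis .
qed

lemma qtens_qid_left_mono:
  assumes M: "elementary_monotone X M" and T: "is_qop T" and "0 < n"
  shows "M (qtens (qid n) T) \<le> M T"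
proof -
  have pos: "0 < qin T" "0 < qout T" using is_qopD(1,2) T by auto
  let ?S = "qperm (n * qout T) (swap_index (qout T) n)"
  let ?S' = "qperm (n * qin T) (swap_index n (qin T))"
  have S: "free X ?S" "free X ?S'"
    using bij_betw_swap_index[of "qout T" n] bij_betw_swap_index[of n "qin T"] pos \<open>0 < n\<close>
    by (auto intro!: free_qperm simp: mult.commute)
  have TI: "is_qop (qtens T (qid n))" using is_qop_qtens_qid T \<open>0 < n\<close> by simp
  have "M (qtens (qid n) T) = M (qcomp ?S (qcomp (qtens T (qid n)) ?S'))"
    using qtens_qid_left_eq[OF T] by simp
  also have "\<dots> \<le> M (qcomp (qtens T (qid n)) ?S')"
    using elementary_monotoneD(1)[OF M is_qop_qcomp[OF TI free_is_qop[OF S(2)]] S(1)]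
    by (simp add: mult.commute)
  also have "\<dots> \<le> M (qtens T (qid n))"
    using elementary_monotoneD(2)[OF M TI S(2)] by (simp add: mult.commute)
  also have "\<dots> \<le> M T" using elementary_monotoneD(3)[OF M T \<open>0 < n\<close>] .
  finally show ?thesis .
qed

lemma qtens_free_left_mono:
  assumes M: "elementary_monotone X M" and T: "is_qop T" and P: "free X P"
  shows "M (qtens P T) \<le> M T"
proof -
  have pos: "0 < qin T" "0 < qout P" using is_qopD(1,2) free_is_qop[OF P] T by auto
  have "M (qtens P T) = M (qcomp (qtens (qid (qout P)) T) (qtens P (qid (qin T))))"
    using qtens_eq_qcomp[OF free_is_qop[OF P] T] by simp
  also have "\<dots> \<le> M (qtens (qid (qout P)) T)"
    using elementary_monotoneD(2)[OF M is_qop_qtens[OF is_qop_qid T]] free_qtens[OF P free_qid] pos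
    by simp
  also have "\<dots> \<le> M T" using qtens_qid_left_mono[OF M T] pos by simp
  finally show ?thesis .
qed

lemma elem_apply_mono:
  assumes M: "elementary_monotone X M"
    and e: "free X (elem_op e)" and T: "is_qop T" and T': "elem_apply e T = Some T'"
  shows "M T' \<le> M T \<and> is_qop T'"
proof (cases e)
  case (Post P)
  then show ?thesis
    using elementary_monotoneD(1)[OF M T] e T' is_qop_qcomp[OF free_is_qop T] by (auto split: if_splits)
next
  case (Pre P)
  then show ?thesis
    using elementary_monotoneD(2)[OF M T] e T' is_qop_qcomp[OF T free_is_qop] by (auto split: if_splits)
next
  case (TensR P)
  then show ?thesis
    using qtens_free_right_mono[OF M T] is_qop_qtens[OF T free_is_qop] e T' by auto
next
  case (TensL P)
  then show ?thesis
    using qtens_free_left_mono[OF M T] is_qop_qtens[OF free_is_qop T] e T' by auto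
qed

lemma sop_apply_mono:
  assumes M: "elementary_monotone X M"
  shows "free_sop X F \<Longrightarrow> is_qop T \<Longrightarrow> sop_apply F T = Some T' \<Longrightarrow> M T' \<le> M T"
proof (induction F arbitrary: T)
  case (Cons e F)
  then obtain T1 where e: "elem_apply e T = Some T1" and F: "sop_apply F T1 = Some T'"
    by (auto split: option.splits)
  have "free X (elem_op e)" and "free_sop X F" using Cons.prems(1) by (simp_all add: free_sop_def)
  then have "M T1 \<le> M T" and "M T' \<le> M T1"
    using elem_apply_mono[OF M _ \<open>is_qop T\<close> e] Cons.IH[OF _ _ F] by simp_all
  then show ?case by linarith
qed simp

lemma sop_monotone_iff_elementary_monotone:
  "(\<forall>F \<Theta> \<Theta>'. free_sop X F \<longrightarrow> is_qop \<Theta> \<longrightarrow> sop_apply F \<Theta> = Some \<Theta>' \<longrightarrow> M \<Theta>' \<le> M \<Theta>) \<longleftrightarrow>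
   elementary_monotone X M"
proof
  assume mono: "\<forall>F \<Theta> \<Theta>'. free_sop X F \<longrightarrow> is_qop \<Theta> \<longrightarrow> sop_apply F \<Theta> = Some \<Theta>' \<longrightarrow> M \<Theta>' \<le> M \<Theta>"
  have elem: "M \<Theta>' \<le> M \<Theta>" if "free X (elem_op e)" "is_qop \<Theta>" "elem_apply e \<Theta> = Some \<Theta>'" for e \<Theta> \<Theta>'
    using mono[rule_format, of "[e]" \<Theta> \<Theta>'] that by (simp add: free_sop_def)
  show "elementary_monotone X M"
    unfolding elementary_monotone_def
  proof (intro conjI allI impI)
    fix \<Theta> \<Phi> assume "is_qop \<Theta>" "free X \<Phi>" "qin \<Phi> = qout \<Theta>"
    then show "M (qcomp \<Phi> \<Theta>) \<le> M \<Theta>" using elem[of "Post \<Phi>" \<Theta>] by simp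
  next
    fix \<Theta> \<Phi> assume "is_qop \<Theta>" "free X \<Phi>" "qout \<Phi> = qin \<Theta>"
    then show "M (qcomp \<Theta> \<Phi>) \<le> M \<Theta>" using elem[of "Pre \<Phi>" \<Theta>] by simp
  next
    fix \<Theta> and k :: nat assume "is_qop \<Theta>" "0 < k"
    then show "M (qtens \<Theta> (qid k)) \<le> M \<Theta>" using elem[of "TensR (qid k)" \<Theta>] free_qid by simp
  qed
qed (use sop_apply_mono in blast)

theorem proposition13:
  fixes X :: notion and M :: "qop \<Rightarrow> real"
  assumes nonneg: "\<forall>\<Theta>. is_qop \<Theta> \<longrightarrow> 0 \<le> M \<Theta>"
  shows "is_measure X M \<longleftrightarrow>
           (\<forall>\<Theta>. is_qop \<Theta> \<longrightarrow> (M \<Theta> = 0 \<longleftrightarrow> free X \<Theta>)) \<and>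
           (\<forall>\<Theta> \<Phi>. is_qop \<Theta> \<longrightarrow> free X \<Phi> \<longrightarrow> qin \<Phi> = qout \<Theta> \<longrightarrow> M (qcomp \<Phi> \<Theta>) \<le> M \<Theta>) \<and>
           (\<forall>\<Theta> \<Phi>. is_qop \<Theta> \<longrightarrow> free X \<Phi> \<longrightarrow> qout \<Phi> = qin \<Theta> \<longrightarrow> M (qcomp \<Theta> \<Phi>) \<le> M \<Theta>) \<and>
           (\<forall>\<Theta> k. is_qop \<Theta> \<longrightarrow> 0 < k \<longrightarrow> M (qtens \<Theta> (qid k)) \<le> M \<Theta>) \<and>
           convex_meas M"
  by (simp only: is_measure_def sop_monotone_iff_elementary_monotone elementary_monotone_def
      conj_assoc nonneg[THEN eqTrueI] simp_thms)

end
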